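(* Let $\gamma=(\gamma_1,\gamma_2)\ge(0,0)$ and $\varkappa\ge0$ with $\gamma_2\ge\varkappa$. If $A\in\mathcal M_{\gamma,0}$ and $B\in\mathcal M_{\gamma,\varkappa}$, then the matrix products $AB$ and $BA$ (defined by $(AB)_a^b=\sum_{c\in\mathcal L}A_a^cB_c^b$) exist (the defining series converge absolutely), belong to $\mathcal M_{\gamma,\varkappa}$, and $$|AB|_{\gamma,\varkappa}\le|A|_{\gamma,0}|B|_{\gamma,\varkappa},\qquad |BA|_{\gamma,\varkappa}\le|A|_{\gamma,0}|B|_{\gamma,\varkappa}.$$
   Context: Let $d_*\ge1$ and let $\mathcal L\subset\mathbb Z^{d_*}$. For $a\in\mathbb Z^{d_*}$, $\langle a\rangle=\max(|a|,1)$, and $[a-b]=\min(|a-b|,|a+b|)$. For $\gamma=(\gamma_1,\gamma_2)$ and $\varkappa\ge0$ let $e_{\gamma,\varkappa}(a,b)=C\,e^{\gamma_1[a-b]}\max([a-b],1)^{\gamma_2}\min(\langle a\rangle,\langle b\rangle)^{\varkappa}$, where $C\ge1$ is a fixed constant, taken sufficiently large depending only on $\gamma_2$ and $\varkappa$ (standing assumption). For a matrix $A=(A_a^b)_{a,b\in\mathcal L}$ whose entries $A_a^b$ are complex $2\times2$ matrices, let $$|A|_{\gamma,\varkappa}=\max\Big\{\sup_a\sum_b\|A_a^b\|\,e_{\gamma,\varkappa}(a,b),\ \sup_b\sum_a\|A_a^b\|\,e_{\gamma,\varkappa}(a,b)\Big\},$$ $\|\cdot\|$ being the operator norm of $2\times2$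 matrices, and let $\mathcal M_{\gamma,\varkappa}$ be the space of such matrices with $|A|_{\gamma,\varkappa}<\infty$. *)

theory Defs
  imports "HOL-Analysis.Analysis"
begin

text \<open>Points of Z^d are represented as functions nat => int vanishing outside {..<d}.\<close>

type_synonym lpt = "nat \<Rightarrow> int"
type_synonym blk = "complex ^ 2 ^ 2"

definition Zd :: "nat \<Rightarrow> lpt set" where
  "Zd d = {a. \<forall>i\<ge>d. a i = 0}"

definition lnorm :: "nat \<Rightarrow> lpt \<Rightarrow> real" where
  "lnorm d a = sqrt (\<Sum>i<d. (real_of_int (a i))\<^sup>2)"

definition bracket :: "nat \<Rightarrow> lpt \<Rightarrow> real" where
  "bracket d a = max (lnorm d a) 1"

definition sqdist :: "nat \<Rightarrow> lpt \<Rightarrow> lpt \<Rightarrow> real" where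
  "sqdist d a b = min (lnorm d (\<lambda>i. a i - b i)) (lnorm d (\<lambda>i. a i + b i))"

definition wgt :: "real \<Rightarrow> nat \<Rightarrow> real \<Rightarrow> real \<Rightarrow> real \<Rightarrow> lpt \<Rightarrow> lpt \<Rightarrow> real" where
  "wgt C d g1 g2 k a b =
     C * exp (g1 * sqdist d a b) * (max (sqdist d a b) 1) powr g2
       * (min (bracket d a) (bracket d b)) powr k"

definition opn :: "blk \<Rightarrow> real" where
  "opn M = onorm (\<lambda>x. M *v x)"

definition mnorm :: "real \<Rightarrow> nat \<Rightarrow> lpt set \<Rightarrow> real \<Rightarrow> real \<Rightarrow> real
                     \<Rightarrow> (lpt \<Rightarrow> lpt \<Rightarrow> blk) \<Rightarrow> ennreal" where
  "mnorm C d L g1 g2 k A =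
     max (SUP a\<in>L. (\<Sum>\<^sub>\<infinity>b\<in>L. ennreal (opn (A a b) * wgt C d g1 g2 k a b)))
         (SUP b\<in>L. (\<Sum>\<^sub>\<infinity>a\<in>L. ennreal (opn (A a b) * wgt C d g1 g2 k a b)))"

definition mprod :: "lpt set \<Rightarrow> (lpt \<Rightarrow> lpt \<Rightarrow> blk) \<Rightarrow> (lpt \<Rightarrow> lpt \<Rightarrow> blk) \<Rightarrow> (lpt \<Rightarrow> lpt \<Rightarrow> blk)" where
  "mprod L A B = (\<lambda>a b. \<Sum>\<^sub>\<infinity>c\<in>L. A a c ** B c b)"

end

theory Submission
  imports Defs
begin

text \<open>For \<open>C \<ge> 2 powr (\<gamma>\<^sub>2 + \<kappa>)\<close> the weight is submultiplicative,
  \<open>e\<^sub>\<kappa>(a,b) \<le> e\<^sub>0(a,c) e\<^sub>\<kappa>(c,b)\<close>. The exponential factor follows from the triangle inequality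
  for \<open>[a-b]\<close>. With \<open>X = max([a-c],1)\<close> and \<open>Y = max([c-b],1)\<close> one has
  \<open>max([a-b],1) \<le> 2 max(X,Y)\<close> and \<open>min(\<langle>a\<rangle>,\<langle>b\<rangle>) \<le> 2 min(\<langle>c\<rangle>,\<langle>b\<rangle>) min(X,Y)\<close>, and
  \<open>\<kappa> \<le> \<gamma>\<^sub>2\<close> lets \<open>min(X,Y) powr \<kappa>\<close> be absorbed, because
  \<open>max(X,Y) powr \<gamma>\<^sub>2 * min(X,Y) powr \<gamma>\<^sub>2 = X powr \<gamma>\<^sub>2 * Y powr \<gamma>\<^sub>2\<close>.
  Hence the weighted entries of \<open>AB\<close> are dominated by the product of the weighted kernels of
  \<open>A\<close> and \<open>B\<close>, and Schur's test -- the maximal row and column sums of a product of nonnegative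
  kernels are at most the products of those of the factors -- gives the estimate; \<open>BA\<close> is
  symmetric.\<close>

lemma lnorm_eq_L2_set: "lnorm d x = L2_set (\<lambda>i. real_of_int (x i)) {..<d}"
  by (simp add: lnorm_def L2_set_def)

lemma lnorm_nonneg: "lnorm d x \<ge> 0"
  by (simp add: lnorm_def sum_nonneg)

lemma lnorm_triangle:
  assumes "\<And>i. z i = x i + y i"
  shows "lnorm d z \<le> lnorm d x + lnorm d y"
  unfolding lnorm_eq_L2_set assms of_int_add by (rule L2_set_triangle_ineq)

lemma lnorm_uminus:
  assumes "\<And>i. z i = - x i"
  shows "lnorm d z = lnorm d x"
  unfolding lnorm_def by (simp add: assms)

lemma sqdist_nonneg: "sqdist d a b \<ge> 0"
  by (simp add: sqdist_def lnorm_nonneg)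

lemma sqdist_commute: "sqdist d a b = sqdist d b a"
proof -
  have "lnorm d (\<lambda>i. a i - b i) = lnorm d (\<lambda>i. b i - a i)"
    by (rule lnorm_uminus) simp
  then show ?thesis
    by (simp add: sqdist_def add.commute)
qed

lemma sqdist_triangle: "sqdist d a b \<le> sqdist d a c + sqdist d c b"
proof -
  have "lnorm d (\<lambda>i. a i - b i) \<le> lnorm d (\<lambda>i. a i - c i) + lnorm d (\<lambda>i. c i - b i)"
    by (rule lnorm_triangle) simp
  moreover have "lnorm d (\<lambda>i. a i - b i) \<le> lnorm d (\<lambda>i. a i + c i) + lnorm d (\<lambda>i. - (c i + b i))"
    by (rule lnorm_triangle) simp
  moreover have "lnorm d (\<lambda>i. a i + b i) \<le> lnorm d (\<lambda>i. a i - c i) + lnorm d (\<lambda>i. c i + b i)"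
    by (rule lnorm_triangle) simp
  moreover have "lnorm d (\<lambda>i. a i + b i) \<le> lnorm d (\<lambda>i. a i + c i) + lnorm d (\<lambda>i. - (c i - b i))"
    by (rule lnorm_triangle) simp
  moreover have "lnorm d (\<lambda>i. - (c i + b i)) = lnorm d (\<lambda>i. c i + b i)"
    and "lnorm d (\<lambda>i. - (c i - b i)) = lnorm d (\<lambda>i. c i - b i)"
    by (rule lnorm_uminus, simp)+
  ultimately show ?thesis
    unfolding sqdist_def by linarith
qed

lemma lnorm_le_add_sqdist: "lnorm d a \<le> lnorm d c + sqdist d a c"
proof -
  have "lnorm d a \<le> lnorm d c + lnorm d (\<lambda>i. a i - c i)"
    by (rule lnorm_triangle) simp
  moreover have "lnorm d a \<le> lnorm d (\<lambda>i. - c i) + lnorm d (\<lambda>i. a i + c i)"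
    by (rule lnorm_triangle) simp
  moreover have "lnorm d (\<lambda>i. - c i) = lnorm d c"
    by (rule lnorm_uminus) simp
  ultimately show ?thesis
    unfolding sqdist_def by linarith
qed

lemma bracket_ge_1: "bracket d a \<ge> 1"
  by (simp add: bracket_def)

lemma add_le_2_mult:
  fixes u v :: real
  assumes "u \<ge> 1" "v \<ge> 1"
  shows "u + v \<le> 2 * u * v"
proof -
  have "0 \<le> (u - 1) * (v - 1)" using assms by simp
  then show ?thesis using assms by (simp add: algebra_simps)
qed

lemma min_bracket_le:
  "min (bracket d a) (bracket d b) \<le>
     2 * min (bracket d c) (bracket d b) * min (max (sqdist d a c) 1) (max (sqdist d c b) 1)"
  (is "?m \<le> 2 * ?m' * ?n")
proof (cases "bracket d c \<le> bracket d b")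
  case True
  have "bracket d a \<le> bracket d c + max (sqdist d a c) 1"
    using lnorm_le_add_sqdist[of d a c] bracket_ge_1[of d c] unfolding bracket_def by linarith
  moreover have "bracket d b \<le> bracket d c + max (sqdist d c b) 1"
    using lnorm_le_add_sqdist[of d b c] sqdist_commute[of d b c] bracket_ge_1[of d c]
    unfolding bracket_def by linarith
  ultimately have "?m \<le> bracket d c + ?n" by linarith
  also have "\<dots> \<le> 2 * bracket d c * ?n" by (rule add_le_2_mult) (auto simp: bracket_ge_1)
  finally show ?thesis using True by simp
next
  case False
  have "?m \<le> bracket d b + ?n" by (simp add: min.coboundedI2 max_def)
  also have "\<dots> \<le> 2 * bracket d b * ?n" by (rule add_le_2_mult) (auto simp: bracket_ge_1)
  finally show ?thesis using False by simp
qed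

lemma wgt_commute: "wgt C d g1 g2 k a b = wgt C d g1 g2 k b a"
  unfolding wgt_def using sqdist_commute[of d a b] by (simp add: min.commute)

lemma wgt_ge_1:
  assumes "C \<ge> 1" "g1 \<ge> 0" "g2 \<ge> 0" "k \<ge> 0"
  shows "wgt C d g1 g2 k a b \<ge> 1"
proof -
  have "1 \<le> exp (g1 * sqdist d a b)" using assms sqdist_nonneg[of d a b] by simp
  moreover have "1 \<le> max (sqdist d a b) 1 powr g2" using assms by (simp add: ge_one_powr_ge_zero)
  moreover have "1 \<le> min (bracket d a) (bracket d b) powr k"
    using assms bracket_ge_1[of d a] bracket_ge_1[of d b] by (simp add: ge_one_powr_ge_zero)
  ultimately have "1 * 1 * 1 * 1 \<le> C * exp (g1 * sqdist d a b) * max (sqdist d a b) 1 powr g2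
      * min (bracket d a) (bracket d b) powr k"
    using assms by (intro mult_mono) auto
  then show ?thesis by (simp add: wgt_def)
qed

lemma wgt_submult:
  assumes C: "C \<ge> 2 powr (g2 + k)" and "g1 \<ge> 0" and "0 \<le> k" "k \<le> g2"
  shows "wgt C d g1 g2 k a b \<le> wgt C d g1 g2 0 a c * wgt C d g1 g2 k c b"
proof -
  define X where "X = max (sqdist d a c) 1"
  define Y where "Y = max (sqdist d c b) 1"
  define Z where "Z = max (sqdist d a b) 1"
  define m where "m = min (bracket d a) (bracket d b)"
  define m' where "m' = min (bracket d c) (bracket d b)"
  have X: "X \<ge> 1" and Y: "Y \<ge> 1" and Z: "Z \<ge> 1" and m: "m \<ge> 1" and m': "m' \<ge> 1"
    by (auto simp: X_def Y_def Z_def m_def m'_def bracket_ge_1)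
  have "C > 0" using C by (smt (verit) powr_gt_zero)
  have exp_le: "exp (g1 * sqdist d a b) \<le> exp (g1 * sqdist d a c) * exp (g1 * sqdist d c b)"
    using mult_left_mono[OF sqdist_triangle[of d a b c] \<open>g1 \<ge> 0\<close>]
    by (simp add: distrib_left flip: exp_add)
  have "Z \<le> 2 * max X Y"
    using sqdist_triangle[of d a b c] unfolding X_def Y_def Z_def by linarith
  then have Z_le: "Z powr g2 \<le> 2 powr g2 * max X Y powr g2"
    using Z X assms by (auto intro: powr_mono2 simp flip: powr_mult)
  have "m \<le> 2 * m' * min X Y"
    unfolding m_def m'_def X_def Y_def by (rule min_bracket_le)
  then have "m powr k \<le> 2 powr k * m' powr k * min X Y powr k"
    using m X Y m' assms by (auto intro: powr_mono2 simp flip: powr_mult)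
  also have "\<dots> \<le> 2 powr k * m' powr k * min X Y powr g2"
    using X Y assms by (intro mult_left_mono powr_mono) auto
  finally have m_le: "m powr k \<le> 2 powr k * m' powr k * min X Y powr g2" .
  have "max X Y powr g2 * min X Y powr g2 = X powr g2 * Y powr g2"
    by (cases "X \<le> Y") (auto simp: max_def min_def)
  then have "Z powr g2 * m powr k \<le> 2 powr (g2 + k) * (X powr g2 * Y powr g2 * m' powr k)"
    using mult_mono[OF Z_le m_le] by (simp add: powr_add algebra_simps)
  also have "\<dots> \<le> C * (X powr g2 * Y powr g2 * m' powr k)"
    using C by (intro mult_right_mono) auto
  finally have poly_le: "Z powr g2 * m powr k \<le> C * (X powr g2 * Y powr g2 * m' powr k)" .
  have "wgt C d g1 g2 k a b = C * exp (g1 * sqdist d a b) * (Z powr g2 * m powr k)"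
    unfolding wgt_def Z_def m_def by (simp add: algebra_simps)
  also have "\<dots> \<le> C * (exp (g1 * sqdist d a c) * exp (g1 * sqdist d c b))
      * (C * (X powr g2 * Y powr g2 * m' powr k))"
    using \<open>C > 0\<close> by (intro mult_mono mult_left_mono exp_le poly_le) auto
  also have "\<dots> = wgt C d g1 g2 0 a c * wgt C d g1 g2 k c b"
    unfolding wgt_def X_def Y_def m'_def using bracket_ge_1[of d a] bracket_ge_1[of d c]
    by (simp add: algebra_simps)
  finally show ?thesis .
qed

lemma wgt_submult':
  assumes "C \<ge> 2 powr (g2 + k)" and "g1 \<ge> 0" and "0 \<le> k" "k \<le> g2"
  shows "wgt C d g1 g2 k a b \<le> wgt C d g1 g2 k a c * wgt C d g1 g2 0 c b"
  using wgt_submult[OF assms, of d b a c] wgt_commute[of C d g1 g2 _ _ _]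
  by (simp add: mult.commute)

lemma matrix_entry_le_onorm:
  fixes M :: "complex ^ 'n ^ 'm"
  shows "norm (M $ i $ j) \<le> onorm ((*v) M)"
proof -
  have "norm (M $ i $ j) = norm ((M *v axis j 1) $ i)"
    by (simp add: matrix_vector_mult_def axis_def if_distrib cong: if_cong)
  also have "\<dots> \<le> norm (M *v axis j 1)"
    by (rule Finite_Cartesian_Product.norm_nth_le)
  also have "\<dots> \<le> onorm ((*v) M) * norm (axis j (1::complex))"
    by (rule onorm) simp
  finally show ?thesis
    by simp
qed

lemma opn_nonneg: "opn M \<ge> 0"
  unfolding opn_def by (rule onorm_pos_le) simp

lemma opn_apply_le: "norm (M *v x) \<le> opn M * norm x"
  unfolding opn_def by (rule onorm) simp

lemma opn_mult_le: "opn (M ** N) \<le> opn M * opn N"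
proof -
  have "(\<lambda>x. (M ** N) *v x) = (\<lambda>x. M *v x) \<circ> (\<lambda>x. N *v x)"
    by (simp add: o_def matrix_vector_mul_assoc)
  then show ?thesis
    unfolding opn_def by (simp add: onorm_compose)
qed

lemma norm_le_opn: "norm M \<le> 4 * opn M"
proof -
  have "norm M \<le> (\<Sum>i\<in>UNIV. norm (M $ i))"
    unfolding norm_vec_def by (rule L2_set_le_sum) simp
  also have "\<dots> \<le> (\<Sum>i\<in>(UNIV::2 set). \<Sum>j\<in>(UNIV::2 set). norm (M $ i $ j))"
    unfolding norm_vec_def by (intro sum_mono L2_set_le_sum) simp
  also have "\<dots> \<le> (\<Sum>i\<in>(UNIV::2 set). \<Sum>j\<in>(UNIV::2 set). opn M)"
    unfolding opn_def by (intro sum_mono matrix_entry_le_onorm)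
  finally show ?thesis
    by simp
qed

lemma bounded_linear_matrix_vector_mult_left:
  "bounded_linear (\<lambda>M::complex ^ 'n ^ 'm. M *v x)"
proof -
  have "linear (\<lambda>M::complex ^ 'n ^ 'm. M *v x)"
    by (rule linearI)
      (simp_all add: matrix_vector_mult_def vec_eq_iff sum.distrib scaleR_sum_right algebra_simps)
  then show ?thesis
    by (simp add: linear_conv_bounded_linear)
qed

lemma opn_infsum_le:
  assumes "(\<lambda>c. opn (X c)) summable_on L"
  shows "(\<lambda>c. norm (X c)) summable_on L"
    and "opn (\<Sum>\<^sub>\<infinity>c\<in>L. X c) \<le> (\<Sum>\<^sub>\<infinity>c\<in>L. opn (X c))"
proof -
  show norm_summable: "(\<lambda>c. norm (X c)) summable_on L"
    by (rule summable_on_comparison_test[OF summable_on_cmult_right[OF assms, of 4]])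
      (simp_all add: norm_le_opn)
  have "norm ((\<Sum>\<^sub>\<infinity>c\<in>L. X c) *v x) \<le> (\<Sum>\<^sub>\<infinity>c\<in>L. opn (X c)) * norm x" for x
  proof (rule norm_infsum_le)
    show "((\<lambda>c. X c *v x) has_sum ((\<Sum>\<^sub>\<infinity>c\<in>L. X c) *v x)) L"
      using has_sum_bounded_linear[OF bounded_linear_matrix_vector_mult_left
          has_sum_infsum[OF abs_summable_summable[OF norm_summable]]] .
    show "((\<lambda>c. opn (X c) * norm x) has_sum ((\<Sum>\<^sub>\<infinity>c\<in>L. opn (X c)) * norm x)) L"
      using has_sum_cmult_left[OF has_sum_infsum[OF assms]] .
  qed (rule opn_apply_le)
  then show "opn (\<Sum>\<^sub>\<infinity>c\<in>L. X c) \<le> (\<Sum>\<^sub>\<infinity>c\<in>L. opn (X c))"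
    unfolding opn_def by (rule onorm_le)
qed

lemma opn_infsum_mult_le:
  assumes "(\<lambda>c. opn (M c) * opn (N c)) summable_on L"
  shows "(\<lambda>c. norm (M c ** N c)) summable_on L"
    and "opn (\<Sum>\<^sub>\<infinity>c\<in>L. M c ** N c) \<le> (\<Sum>\<^sub>\<infinity>c\<in>L. opn (M c) * opn (N c))"
proof -
  have summable: "(\<lambda>c. opn (M c ** N c)) summable_on L"
    using assms by (rule summable_on_comparison_test) (simp_all add: opn_mult_le opn_nonneg)
  show "(\<lambda>c. norm (M c ** N c)) summable_on L"
    using summable by (rule opn_infsum_le)
  have "opn (\<Sum>\<^sub>\<infinity>c\<in>L. M c ** N c) \<le> (\<Sum>\<^sub>\<infinity>c\<in>L. opn (M c ** N c))"
    using summable by (rule opn_infsum_le)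
  also have "\<dots> \<le> (\<Sum>\<^sub>\<infinity>c\<in>L. opn (M c) * opn (N c))"
    using summable assms by (rule infsum_mono) (rule opn_mult_le)
  finally show "opn (\<Sum>\<^sub>\<infinity>c\<in>L. M c ** N c) \<le> (\<Sum>\<^sub>\<infinity>c\<in>L. opn (M c) * opn (N c))" .
qed

lemma infsum_ennreal_le_iff:
  fixes f :: "'a \<Rightarrow> ennreal"
  shows "(\<Sum>\<^sub>\<infinity>x\<in>A. f x) \<le> y \<longleftrightarrow> (\<forall>F. finite F \<longrightarrow> F \<subseteq> A \<longrightarrow> sum f F \<le> y)"
  by (subst nonneg_infsum_complete) (auto simp: SUP_le_iff)

lemma sum_le_infsum_ennreal:
  fixes f :: "'a \<Rightarrow> ennreal"
  assumes "finite F" "F \<subseteq> A"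
  shows "sum f F \<le> (\<Sum>\<^sub>\<infinity>x\<in>A. f x)"
  using infsum_ennreal_le_iff[of f A "infsum f A"] assms by simp

lemma sum_infsum_ennreal:
  fixes f :: "'b \<Rightarrow> 'a \<Rightarrow> ennreal"
  assumes "finite F"
  shows "(\<Sum>b\<in>F. \<Sum>\<^sub>\<infinity>x\<in>A. f b x) = (\<Sum>\<^sub>\<infinity>x\<in>A. \<Sum>b\<in>F. f b x)"
  using assms
proof (induction F rule: finite_induct)
  case (insert b F)
  then show ?case
    using infsum_add[of "f b" A "\<lambda>x. \<Sum>b\<in>F. f b x"] by (simp add: nonneg_summable_on_complete)
qed simp

lemma infsum_mult_right_le_ennreal:
  fixes f :: "'a \<Rightarrow> ennreal"
  shows "(\<Sum>\<^sub>\<infinity>x\<in>A. f x * K) \<le> (\<Sum>\<^sub>\<infinity>x\<in>A. f x) * K"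
  unfolding infsum_ennreal_le_iff
  by (auto simp: sum_distrib_right[symmetric] intro: mult_right_mono sum_le_infsum_ennreal)

lemma infsum_ennreal_of_real:
  fixes f :: "'a \<Rightarrow> real"
  assumes nonneg: "\<And>x. x \<in> A \<Longrightarrow> f x \<ge> 0" and finite: "(\<Sum>\<^sub>\<infinity>x\<in>A. ennreal (f x)) < \<infinity>"
  shows "f summable_on A" and "ennreal (\<Sum>\<^sub>\<infinity>x\<in>A. f x) = (\<Sum>\<^sub>\<infinity>x\<in>A. ennreal (f x))"
proof -
  have partial_sums_le: "sum f F \<le> enn2real (\<Sum>\<^sub>\<infinity>x\<in>A. ennreal (f x))"
    if "finite F" "F \<subseteq> A" for F
  proof -
    have "ennreal (sum f F) \<le> (\<Sum>\<^sub>\<infinity>x\<in>A. ennreal (f x))"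
      using that nonneg by (subst sum_ennreal[symmetric]) (auto intro: sum_le_infsum_ennreal)
    then have "ennreal (sum f F) \<le> ennreal (enn2real (\<Sum>\<^sub>\<infinity>x\<in>A. ennreal (f x)))"
      using finite by simp
    then show ?thesis
      by (simp add: ennreal_le_iff)
  qed
  have "bdd_above (sum f ` {F. F \<subseteq> A \<and> finite F})"
    using partial_sums_le by (auto intro!: bdd_aboveI2)
  then show summable: "f summable_on A"
    using nonneg by (rule nonneg_bdd_above_summable_on[rotated])
  have "ennreal (\<Sum>\<^sub>\<infinity>x\<in>A. f x) = (SUP F\<in>{F. finite F \<and> F \<subseteq> A}. ennreal (sum f F))"
    using summable nonneg by (rule infsum_nonneg_is_SUPREMUM_ennreal)
  also have "\<dots> = (\<Sum>\<^sub>\<infinity>x\<in>A. ennreal (f x))"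
    using nonneg by (subst nonneg_infsum_complete) (auto intro!: SUP_cong simp: subset_eq sum_ennreal)
  finally show "ennreal (\<Sum>\<^sub>\<infinity>x\<in>A. f x) = (\<Sum>\<^sub>\<infinity>x\<in>A. ennreal (f x))" .
qed

definition schur_norm :: "'a set \<Rightarrow> ('a \<Rightarrow> 'a \<Rightarrow> ennreal) \<Rightarrow> ennreal" where
  "schur_norm L p = max (SUP a\<in>L. \<Sum>\<^sub>\<infinity>b\<in>L. p a b) (SUP b\<in>L. \<Sum>\<^sub>\<infinity>a\<in>L. p a b)"

lemma mnorm_eq_schur_norm:
  "mnorm C d L g1 g2 k M = schur_norm L (\<lambda>a b. ennreal (opn (M a b) * wgt C d g1 g2 k a b))"
  by (simp add: mnorm_def schur_norm_def)

lemma schur_norm_transpose: "schur_norm L (\<lambda>a b. p b a) = schur_norm L p"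
  by (simp add: schur_norm_def max.commute)

lemma row_sum_le_schur_norm: "a \<in> L \<Longrightarrow> (\<Sum>\<^sub>\<infinity>b\<in>L. p a b) \<le> schur_norm L p"
  unfolding schur_norm_def by (intro max.coboundedI1 SUP_upper)

lemma entry_le_schur_norm:
  assumes "a \<in> L" "b \<in> L"
  shows "p a b \<le> schur_norm L p"
proof -
  have "p a b \<le> (\<Sum>\<^sub>\<infinity>b\<in>L. p a b)"
    using sum_le_infsum_ennreal[of "{b}" L "p a"] assms by simp
  also have "\<dots> \<le> schur_norm L p"
    using assms(1) by (rule row_sum_le_schur_norm)
  finally show ?thesis .
qed

lemma schur_norm_mono:
  assumes "\<And>a b. a \<in> L \<Longrightarrow> b \<in> L \<Longrightarrow> p a b \<le> q a b"
  shows "schur_norm L p \<le> schur_norm L q"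
proof -
  have "(\<Sum>\<^sub>\<infinity>b\<in>L. p a b) \<le> (\<Sum>\<^sub>\<infinity>b\<in>L. q a b)" and "(\<Sum>\<^sub>\<infinity>b\<in>L. p b a) \<le> (\<Sum>\<^sub>\<infinity>b\<in>L. q b a)"
    if "a \<in> L" for a
    using that assms by (auto intro!: infsum_mono simp: nonneg_summable_on_complete)
  then show ?thesis
    unfolding schur_norm_def by (intro max.mono SUP_subset_mono[OF subset_refl])
qed

lemma row_sum_product_le:
  fixes p q :: "'a \<Rightarrow> 'a \<Rightarrow> ennreal"
  shows  "(\<Sum>\<^sub>\<infinity>b\<in>L. \<Sum>\<^sub>\<infinity>c\<in>L. p a c * q c b) \<le> (\<Sum>\<^sub>\<infinity>c\<in>L. p a c) * (SUP c\<in>L. \<Sum>\<^sub>\<infinity>b\<in>L. q c b)"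
proof (rule infsum_ennreal_le_iff[THEN iffD2], intro allI impI)
  fix F assume F: "finite F" "F \<subseteq> L"
  have "(\<Sum>b\<in>F. \<Sum>\<^sub>\<infinity>c\<in>L. p a c * q c b) = (\<Sum>\<^sub>\<infinity>c\<in>L. p a c * (\<Sum>b\<in>F. q c b))"
    using F by (simp add: sum_infsum_ennreal sum_distrib_left)
  also have "\<dots> \<le> (\<Sum>\<^sub>\<infinity>c\<in>L. p a c * (SUP c\<in>L. \<Sum>\<^sub>\<infinity>b\<in>L. q c b))"
    using F by (intro infsum_mono mult_left_mono order.trans[OF sum_le_infsum_ennreal] SUP_upper)
      (auto simp: nonneg_summable_on_complete intro: SUP_upper)
  also have "\<dots> \<le> (\<Sum>\<^sub>\<infinity>c\<in>L. p a c) * (SUP c\<in>L. \<Sum>\<^sub>\<infinity>b\<in>L. q c b)"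
    by (rule infsum_mult_right_le_ennreal)
  finally show "(\<Sum>b\<in>F. \<Sum>\<^sub>\<infinity>c\<in>L. p a c * q c b) \<le> \<dots>" .
qed

lemma schur_norm_product_le:
  "schur_norm L (\<lambda>a b. \<Sum>\<^sub>\<infinity>c\<in>L. p a c * q c b) \<le> schur_norm L p * schur_norm L q"
proof -
  have rows: "(\<Sum>\<^sub>\<infinity>b\<in>L. \<Sum>\<^sub>\<infinity>c\<in>L. p a c * q c b) \<le> schur_norm L p * schur_norm L q"
    if "a \<in> L" for a p q
  proof -
    have "(SUP c\<in>L. \<Sum>\<^sub>\<infinity>b\<in>L. q c b) \<le> schur_norm L q"
      unfolding schur_norm_def by simp
    then show ?thesis
      using row_sum_le_schur_norm[OF that, of p]
      by (intro order.trans[OF row_sum_product_le] mult_mono) auto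
  qed
  have cols: "(\<Sum>\<^sub>\<infinity>a\<in>L. \<Sum>\<^sub>\<infinity>c\<in>L. p a c * q c b) \<le> schur_norm L p * schur_norm L q"
    if "b \<in> L" for b
  proof -
    have "(\<Sum>\<^sub>\<infinity>a\<in>L. \<Sum>\<^sub>\<infinity>c\<in>L. p a c * q c b) = (\<Sum>\<^sub>\<infinity>a\<in>L. \<Sum>\<^sub>\<infinity>c\<in>L. q c b * p a c)"
      by (simp only: mult.commute)
    also have "\<dots> \<le> schur_norm L q * schur_norm L p"
      using rows[OF that, of "\<lambda>a b. q b a" "\<lambda>a b. p b a"] by (simp only: schur_norm_transpose[of L p] schur_norm_transpose[of L q])
    finally show ?thesis
      by (simp only: mult.commute)
  qed
  show ?thesis
    unfolding schur_norm_def[of L "\<lambda>a b. \<Sum>\<^sub>\<infinity>c\<in>L. p a c * q c b"]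
  proof (rule max.boundedI)
    show "(SUP a\<in>L. \<Sum>\<^sub>\<infinity>b\<in>L. \<Sum>\<^sub>\<infinity>c\<in>L. p a c * q c b) \<le> schur_norm L p * schur_norm L q"
      by (rule SUP_least) (rule rows)
    show "(SUP b\<in>L. \<Sum>\<^sub>\<infinity>a\<in>L. \<Sum>\<^sub>\<infinity>c\<in>L. p a c * q c b) \<le> schur_norm L p * schur_norm L q"
      by (rule SUP_least) (rule cols)
  qed
qed

lemma opn_infsum_mult_weighted_le:
  fixes M N :: "'c \<Rightarrow> blk" and s t :: "'c \<Rightarrow> real"
  assumes "0 < w" and submult: "\<And>c. w \<le> s c * t c"
    and s: "\<And>c. 0 \<le> s c" and t: "\<And>c. 0 \<le> t c"
    and finite: "(\<Sum>\<^sub>\<infinity>c\<in>L. ennreal (opn (M c) * s c) * ennreal (opn (N c) * t c)) < \<infinity>"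
  shows "(\<lambda>c. norm (M c ** N c)) summable_on L"
    and "ennreal (opn (\<Sum>\<^sub>\<infinity>c\<in>L. M c ** N c) * w)
           \<le> (\<Sum>\<^sub>\<infinity>c\<in>L. ennreal (opn (M c) * s c) * ennreal (opn (N c) * t c))"
proof -
  define F where "F c = opn (M c) * s c * (opn (N c) * t c)" for c
  have F_nonneg: "0 \<le> F c" for c
    using opn_nonneg s t by (simp add: F_def)
  have ennreal_F: "(\<Sum>\<^sub>\<infinity>c\<in>L. ennreal (opn (M c) * s c) * ennreal (opn (N c) * t c))
      = (\<Sum>\<^sub>\<infinity>c\<in>L. ennreal (F c))"
    using opn_nonneg s t by (simp add: F_def ennreal_mult)
  have F_summable: "F summable_on L" and infsum_F: "ennreal (infsum F L) = (\<Sum>\<^sub>\<infinity>c\<in>L. ennreal (F c))"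
    using infsum_ennreal_of_real[of L F] F_nonneg finite ennreal_F by simp_all
  have le_F: "opn (M c) * opn (N c) * w \<le> F c" for c
  proof -
    have "opn (M c) * opn (N c) * w \<le> opn (M c) * opn (N c) * (s c * t c)"
      using submult opn_nonneg by (intro mult_left_mono) auto
    then show ?thesis
      by (simp add: F_def ac_simps)
  qed
  have "(\<lambda>c. opn (M c) * opn (N c) * w) summable_on L"
    using F_summable le_F by (rule summable_on_comparison_test) (use opn_nonneg \<open>0 < w\<close> in simp)
  then have summable: "(\<lambda>c. opn (M c) * opn (N c)) summable_on L"
    using summable_on_cmult_left'[of w "\<lambda>c. opn (M c) * opn (N c)" L] \<open>0 < w\<close> by simp
  then show "(\<lambda>c. norm (M c ** N c)) summable_on L"
    by (rule opn_infsum_mult_le)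
  have "opn (\<Sum>\<^sub>\<infinity>c\<in>L. M c ** N c) * w \<le> (\<Sum>\<^sub>\<infinity>c\<in>L. opn (M c) * opn (N c)) * w"
    using opn_infsum_mult_le(2)[OF summable] \<open>0 < w\<close> by (intro mult_right_mono) auto
  also have "\<dots> = (\<Sum>\<^sub>\<infinity>c\<in>L. opn (M c) * opn (N c) * w)"
    by (rule infsum_cmult_left'[symmetric])
  also have "\<dots> \<le> infsum F L"
    by (rule infsum_mono[OF summable_on_cmult_left[OF summable] F_summable le_F])
  finally show "ennreal (opn (\<Sum>\<^sub>\<infinity>c\<in>L. M c ** N c) * w)
      \<le> (\<Sum>\<^sub>\<infinity>c\<in>L. ennreal (opn (M c) * s c) * ennreal (opn (N c) * t c))"
    unfolding ennreal_F infsum_F[symmetric] by (rule ennreal_leI)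
qed

lemma schur_norm_weighted_mprod_le:
  fixes A B :: "lpt \<Rightarrow> lpt \<Rightarrow> blk" and u v w :: "lpt \<Rightarrow> lpt \<Rightarrow> real"
  assumes submult: "\<And>a b c. w a b \<le> u a c * v c b"
    and w: "\<And>a b. 0 < w a b" and u: "\<And>a b. 0 \<le> u a b" and v: "\<And>a b. 0 \<le> v a b"
    and finite_A: "schur_norm L (\<lambda>a b. ennreal (opn (A a b) * u a b)) < \<infinity>"
    and finite_B: "schur_norm L (\<lambda>a b. ennreal (opn (B a b) * v a b)) < \<infinity>"
  shows "\<forall>a\<in>L. \<forall>b\<in>L. (\<lambda>c. norm (A a c ** B c b)) summable_on L"
    and "schur_norm L (\<lambda>a b. ennreal (opn (mprod L A B a b) * w a b))
           \<le> schur_norm L (\<lambda>a b. ennreal (opn (A a b) * u a b))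
             * schur_norm L (\<lambda>a b. ennreal (opn (B a b) * v a b))"
proof -
  define P where "P = (\<lambda>a b. ennreal (opn (A a b) * u a b))"
  define Q where "Q = (\<lambda>a b. ennreal (opn (B a b) * v a b))"
  define R where "R = (\<lambda>a b. \<Sum>\<^sub>\<infinity>c\<in>L. P a c * Q c b)"
  have R_le: "schur_norm L R \<le> schur_norm L P * schur_norm L Q"
    unfolding R_def by (rule schur_norm_product_le)
  have "schur_norm L P * schur_norm L Q < \<infinity>"
    using finite_A finite_B by (simp add: P_def Q_def ennreal_mult_less_top)
  then have "R a b < \<infinity>" if "a \<in> L" "b \<in> L" for a b
    using entry_le_schur_norm[OF that, of R] R_le by order
  then have entry: "(\<lambda>c. norm (A a c ** B c b)) summable_on L
      \<and> ennreal (opn (mprod L A B a b) * w a b) \<le> R a b" if "a \<in> L" "b \<in> L" for a b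
    using opn_infsum_mult_weighted_le[where w = "w a b" and s = "u a" and t = "\<lambda>c. v c b"
        and M = "A a" and N = "\<lambda>c. B c b" and L = L]
      submult w u v that unfolding R_def P_def Q_def mprod_def by blast
  then show "\<forall>a\<in>L. \<forall>b\<in>L. (\<lambda>c. norm (A a c ** B c b)) summable_on L"
    by blast
  have "schur_norm L (\<lambda>a b. ennreal (opn (mprod L A B a b) * w a b)) \<le> schur_norm L R"
    using entry by (intro schur_norm_mono) blast
  also note R_le
  finally show "schur_norm L (\<lambda>a b. ennreal (opn (mprod L A B a b) * w a b))
      \<le> schur_norm L (\<lambda>a b. ennreal (opn (A a b) * u a b))
        * schur_norm L (\<lambda>a b. ennreal (opn (B a b) * v a b))"
    unfolding P_def Q_def .
qed

theorem proposition2p2: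
  fixes g2 k :: real
  assumes "g2 \<ge> 0" and "k \<ge> 0" and "g2 \<ge> k"
  shows "\<exists>C0\<ge>1. \<forall>C\<ge>C0. \<forall>d::nat. \<forall>L::lpt set. \<forall>g1::real. \<forall>A::lpt \<Rightarrow> lpt \<Rightarrow> blk. \<forall>B::lpt \<Rightarrow> lpt \<Rightarrow> blk.
     d \<ge> 1 \<longrightarrow> L \<subseteq> Zd d \<longrightarrow> g1 \<ge> 0 \<longrightarrow>
     mnorm C d L g1 g2 0 A < (\<infinity>::ennreal) \<longrightarrow> mnorm C d L g1 g2 k B < (\<infinity>::ennreal) \<longrightarrow>
       (\<forall>a\<in>L. \<forall>b\<in>L. (\<lambda>c. norm (A a c ** B c b)) summable_on L \<and>
                       (\<lambda>c. norm (B a c ** A c b)) summable_on L) \<and>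
       mnorm C d L g1 g2 k (mprod L A B) < (\<infinity>::ennreal) \<and>
       mnorm C d L g1 g2 k (mprod L B A) < (\<infinity>::ennreal) \<and>
       mnorm C d L g1 g2 k (mprod L A B) \<le> mnorm C d L g1 g2 0 A * mnorm C d L g1 g2 k B \<and>
       mnorm C d L g1 g2 k (mprod L B A) \<le> mnorm C d L g1 g2 0 A * mnorm C d L g1 g2 k B"
proof (intro exI[of _ "max 1 (2 powr (g2 + k))"] conjI allI impI)
  show "1 \<le> max 1 (2 powr (g2 + k))"
    by simp
  fix C d L g1 and A B :: "lpt \<Rightarrow> lpt \<Rightarrow> blk"
  assume C: "max 1 (2 powr (g2 + k)) \<le> C" and "g1 \<ge> 0"
    and finite_A: "mnorm C d L g1 g2 0 A < \<infinity>" and finite_B: "mnorm C d L g1 g2 k B < \<infinity>"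
  have "1 \<le> C" "2 powr (g2 + k) \<le> C"
    using C by auto
  then have submult_AB: "wgt C d g1 g2 k a b \<le> wgt C d g1 g2 0 a c * wgt C d g1 g2 k c b"
    and submult_BA: "wgt C d g1 g2 k a b \<le> wgt C d g1 g2 k a c * wgt C d g1 g2 0 c b"
    and pos: "0 < wgt C d g1 g2 0 a b" "0 < wgt C d g1 g2 k a b" for a b c
    using assms \<open>g1 \<ge> 0\<close> wgt_ge_1[of C g1 g2 0 d a b] wgt_ge_1[of C g1 g2 k d a b]
    by (simp_all add: wgt_submult wgt_submult')
  note AB = schur_norm_weighted_mprod_le[where u = "wgt C d g1 g2 0" and v = "wgt C d g1 g2 k"
      and w = "wgt C d g1 g2 k" and L = L and A = A and B = B, OF submult_AB pos(2) less_imp_le[OF pos(1)]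
      less_imp_le[OF pos(2)], folded mnorm_eq_schur_norm, OF finite_A finite_B]
  note BA = schur_norm_weighted_mprod_le[where u = "wgt C d g1 g2 k" and v = "wgt C d g1 g2 0"
      and w = "wgt C d g1 g2 k" and L = L and A = B and B = A, OF submult_BA pos(2) less_imp_le[OF pos(2)]
      less_imp_le[OF pos(1)], folded mnorm_eq_schur_norm, OF finite_B finite_A]
  have product_finite: "mnorm C d L g1 g2 0 A * mnorm C d L g1 g2 k B < \<infinity>"
    using finite_A finite_B by (simp add: ennreal_mult_less_top)
  show "\<forall>a\<in>L. \<forall>b\<in>L. (\<lambda>c. norm (A a c ** B c b)) summable_on L \<and> (\<lambda>c. norm (B a c ** A c b)) summable_on L"
    using AB(1) BA(1) by blast
  show AB_le: "mnorm C d L g1 g2 k (mprod L A B) \<le> mnorm C d L g1 g2 0 A * mnorm C d L g1 g2 k B"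
    by (rule AB(2))
  show BA_le: "mnorm C d L g1 g2 k (mprod L B A) \<le> mnorm C d L g1 g2 0 A * mnorm C d L g1 g2 k B"
    using BA(2) by (simp only: mult.commute)
  show "mnorm C d L g1 g2 k (mprod L A B) < \<infinity>"
    using AB_le product_finite by order
  show "mnorm C d L g1 g2 k (mprod L B A) < \<infinity>"
    using BA_le product_finite by order
qed

end
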